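(* Let $X_1,X_2,\dots$ be iid real random variables with common continuous distribution function $F$, and suppose $F\in\mathcal{D}(G)$ with norming constants $a_n>0$, $b_n\in\mathbb{R}$. Then for every $x\in\mathbb{R}$ (at which $G$ is continuous), \[ \Pr\left(\frac{X_n-b_n}{a_n}\le x\ \Big|\ X_n\text{ is a record}\right)\to G(x),\qquad n\to\infty. \]
   Context: $X_m$ is a record if $X_m>\max(X_1,\dots,X_{m-1})$; $X_1$ is always a record. $F\in\mathcal{D}(G)$ (max-domain of attraction) means that there exist $a_n>0$, $b_n\in\mathbb{R}$ with $F^n(a_nx+b_n)\to G(x)$ as $n\to\infty$ at all continuity points $x$ of a non-degenerate distribution function $G$; then $G$ is a univariate extreme value distribution $G_\alpha(x)=\exp(-(1+\alpha x)^{-1/\alpha})$, $1+\alpha x>0$ (with $G_0(x)=\exp(-e^{-x})$), up to location and scale. *)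

theory Defs
  imports "HOL-Probability.Probability"
begin

text \<open>Records: X_1 is always a record; X_n is a record iff it exceeds X_1,...,X_{n-1}.
  Sequences are indexed from 1 (the value at index 0 is ignored).\<close>
definition is_record :: "(nat \<Rightarrow> 'a \<Rightarrow> real) \<Rightarrow> nat \<Rightarrow> 'a \<Rightarrow> bool" where
  "is_record X n \<omega> \<longleftrightarrow> (\<forall>i. 1 \<le> i \<and> i < n \<longrightarrow> X i \<omega> < X n \<omega>)"

definition distribution_function :: "(real \<Rightarrow> real) \<Rightarrow> bool" where
  "distribution_function G \<longleftrightarrow> mono G \<and> (\<forall>x. continuous (at_right x) G)
     \<and> (G \<longlongrightarrow> 0) at_bot \<and> (G \<longlongrightarrow> 1) at_top"

definition nondegenerate_df :: "(real \<Rightarrow> real) \<Rightarrow> bool" where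
  "nondegenerate_df G \<longleftrightarrow> distribution_function G
     \<and> \<not> (\<exists>c. \<forall>x. G x = (if x < c then 0 else 1))"

definition max_domain_attraction ::
  "(real \<Rightarrow> real) \<Rightarrow> (real \<Rightarrow> real) \<Rightarrow> (nat \<Rightarrow> real) \<Rightarrow> (nat \<Rightarrow> real) \<Rightarrow> bool" where
  "max_domain_attraction F G a b \<longleftrightarrow> nondegenerate_df G \<and> (\<forall>n. a n > 0)
     \<and> (\<forall>x. isCont G x \<longrightarrow> (\<lambda>n. F (a n * x + b n) ^ n) \<longlonglongrightarrow> G x)"

end

theory Submission
  imports Defs "HOL-Combinatorics.Transposition"
begin

text \<open>Given that \<open>X\<^sub>n\<close> is a record, it is the strict maximum of \<open>X\<^sub>1, \<dots>, X\<^sub>n\<close>.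
  For iid variables with a continuous distribution function ties have probability zero, and
  by exchangeability each of the \<open>n\<close> indices is equally likely to carry the strict maximum.
  Hence \<open>P(X\<^sub>n \<le> t, X\<^sub>n record) = F(t)\<^sup>n / n\<close> and \<open>P(X\<^sub>n record) = 1 / n\<close>,
  so the conditional probability is \<open>F(a\<^sub>n x + b\<^sub>n)\<^sup>n\<close>, the law of the normalised
  maximum, which tends to \<open>G(x)\<close> by the domain-of-attraction assumption.\<close>

definition strict_max_on :: "'i set \<Rightarrow> 'i \<Rightarrow> ('i \<Rightarrow> 'a::linorder) \<Rightarrow> bool" where
  "strict_max_on I k y \<longleftrightarrow> (\<forall>i\<in>I. i \<noteq> k \<longrightarrow> y i < y k)"

lemma strict_max_on_unique:
  assumes "strict_max_on I k y" "strict_max_on I j y" "k \<in> I" "j \<in> I"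
  shows "k = j"
  using assms less_asym unfolding strict_max_on_def by blast

lemma strict_max_on_restrict [simp]:
  "k \<in> I \<Longrightarrow> strict_max_on I k (restrict y I) \<longleftrightarrow> strict_max_on I k y"
  unfolding strict_max_on_def by simp

lemma ex_strict_max_on_if_inj_on:
  assumes "finite I" "I \<noteq> {}" "inj_on y I"
  shows "\<exists>k\<in>I. strict_max_on I k y"
proof -
  have "Max (y ` I) \<in> y ` I" using assms(1,2) by simp
  then obtain k where k: "k \<in> I" "y k = Max (y ` I)" by auto
  have "y i < y k" if "i \<in> I" "i \<noteq> k" for i
    using that k assms(1,3) by (metis Max_ge finite_imageI image_eqI inj_on_eq_iff order_less_le)
  then show ?thesis using k(1) unfolding strict_max_on_def by blast
qed

lemma strict_max_on_transpose:
  assumes "k \<in> I" "n \<in> I"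
  shows "strict_max_on I n (\<lambda>i\<in>I. y (Transposition.transpose k n i)) \<longleftrightarrow> strict_max_on I k y"
proof -
  let ?\<tau> = "Transposition.transpose k n"
  have "?\<tau> ` I = I"
    using assms by (force simp: Transposition.transpose_def image_iff)
  then have "strict_max_on I n (\<lambda>i\<in>I. y (?\<tau> i)) \<longleftrightarrow>
      (\<forall>j\<in>?\<tau> ` I. j \<noteq> n \<longrightarrow> y (?\<tau> j) < y k)"
    unfolding strict_max_on_def using assms(2) by simp
  also have "\<dots> \<longleftrightarrow> strict_max_on I k y"
    unfolding strict_max_on_def by (auto simp: transpose_eq_iff)
  finally show ?thesis .
qed

lemma sets_PiM_strict_max_on:
  assumes "finite I" "k \<in> I" "Q \<in> sets borel"
  shows "{y \<in> space (PiM I (\<lambda>_. borel)). y k \<in> Q \<and> strict_max_on I k (y :: _ \<Rightarrow> real)}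
           \<in> sets (PiM I (\<lambda>_. borel))"
  unfolding strict_max_on_def using assms by measurable

lemma measure_PiM_strict_max_on_eq:
  fixes \<mu> :: "real measure"
  assumes \<mu>: "prob_space \<mu>" "sets \<mu> = sets borel"
    and I: "finite I" "k \<in> I" "n \<in> I" and Q: "Q \<in> sets borel"
  shows "measure (PiM I (\<lambda>_. \<mu>)) {y \<in> space (PiM I (\<lambda>_. \<mu>)). y k \<in> Q \<and> strict_max_on I k y}
       = measure (PiM I (\<lambda>_. \<mu>)) {y \<in> space (PiM I (\<lambda>_. \<mu>)). y n \<in> Q \<and> strict_max_on I n y}"
    (is "measure ?P (?S k) = measure ?P (?S n)")
proof -
  let ?\<tau> = "Transposition.transpose k n"
  define r where "r y = (\<lambda>i\<in>I. y (?\<tau> i))" for y :: "_ \<Rightarrow> real"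
  have sets_P: "sets ?P = sets (PiM I (\<lambda>_. borel))"
    by (rule sets_PiM_cong) (auto simp: \<mu>(2))
  then have space_P: "space ?P = space (PiM I (\<lambda>_. borel))"
    by (rule sets_eq_imp_space_eq)
  have S_sets: "?S j \<in> sets ?P" if "j \<in> I" for j
    using sets_PiM_strict_max_on[OF I(1) that Q] unfolding sets_P space_P .
  have \<tau>: "inj_on ?\<tau> I" "?\<tau> \<in> I \<rightarrow> I"
    using I by (auto simp: inj_on_def Transposition.transpose_def)
  then have "distr ?P ?P r = ?P"
    using distr_PiM_reindex[of I "\<lambda>_. \<mu>" ?\<tau> I] \<mu>(1) unfolding r_def by simp
  moreover have r_meas: "r \<in> measurable ?P ?P"
    unfolding r_def using \<tau>(2)
    by (intro measurable_restrict) (auto intro!: measurable_component_singleton)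
  moreover have "r -` ?S n \<inter> space ?P = ?S k"
  proof -
    have "r y \<in> space ?P" if "y \<in> space ?P" for y
      using measurable_space[OF r_meas that] .
    moreover have "r y n = y k" for y
      using I(3) unfolding r_def by simp
    ultimately show ?thesis
      using strict_max_on_transpose[OF I(2,3)] unfolding r_def by auto
  qed
  ultimately show ?thesis
    using measure_distr[OF r_meas S_sets[OF I(3)]] by simp
qed

lemma (in prob_space) cdf_distr:
  fixes Z :: "'a \<Rightarrow> real"
  assumes "random_variable borel Z"
  shows "cdf (distr M borel Z) t = prob {\<omega> \<in> space M. Z \<omega> \<le> t}"
proof -
  have "Z -` {..t} \<inter> space M = {\<omega> \<in> space M. Z \<omega> \<le> t}" by auto
  then show ?thesis by (simp add: cdf_def2 measure_distr[OF assms])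
qed

lemma (in prob_space) distr_eq_if_cdf_eq:
  fixes X Y :: "'a \<Rightarrow> real"
  assumes "random_variable borel X" "random_variable borel Y"
    and "\<And>t. prob {\<omega> \<in> space M. X \<omega> \<le> t} = prob {\<omega> \<in> space M. Y \<omega> \<le> t}"
  shows "distr M borel X = distr M borel Y"
  using assms by (intro cdf_unique) (auto simp: cdf_distr)

lemma (in prob_space) indep_var_if_indep_vars:
  assumes "indep_vars M' X I" "i \<in> I" "j \<in> I" "i \<noteq> j"
  shows "indep_var (M' i) (X i) (M' j) (X j)"
proof -
  have "indep_var (M' i) ((\<lambda>f. f i) \<circ> (\<lambda>\<omega>. restrict (\<lambda>i. X i \<omega>) {i}))
                  (M' j) ((\<lambda>f. f j) \<circ> (\<lambda>\<omega>. restrict (\<lambda>i. X i \<omega>) {j}))"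
    using assms by (intro indep_var_compose[OF indep_var_restrict[OF assms(1)]]) auto
  then show ?thesis by (simp add: comp_def)
qed

lemma (in prob_space) prob_eq_zero_if_indep_var_atomless:
  fixes X Y :: "'a \<Rightarrow> real"
  assumes indep: "indep_var borel X borel Y"
    and atomless: "\<And>s. measure (distr M borel Y) {s} = 0"
  shows "prob {\<omega> \<in> space M. X \<omega> = Y \<omega>} = 0"
proof -
  have X: "random_variable borel X" and Y: "random_variable borel Y"
    using indep by (rule indep_var_rv1, rule indep_var_rv2)
  interpret Y: prob_space "distr M borel Y"
    using Y by (rule prob_space_distr)
  define D where "D = {q :: real \<times> real. fst q = snd q}"
  have D: "D \<in> sets (borel \<Otimes>\<^sub>M borel)"
  proof -
    have "{q \<in> space (borel \<Otimes>\<^sub>M borel). fst q = (snd q :: real)} \<in> sets (borel \<Otimes>\<^sub>M borel)"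
      by measurable
    then show ?thesis unfolding D_def by (simp add: space_pair_measure)
  qed
  have XY: "(\<lambda>\<omega>. (X \<omega>, Y \<omega>)) \<in> measurable M (borel \<Otimes>\<^sub>M borel)"
    using X Y by (rule measurable_Pair)
  have "prob {\<omega> \<in> space M. X \<omega> = Y \<omega>} = measure (distr M (borel \<Otimes>\<^sub>M borel) (\<lambda>\<omega>. (X \<omega>, Y \<omega>))) D"
  proof -
    have "(\<lambda>\<omega>. (X \<omega>, Y \<omega>)) -` D \<inter> space M = {\<omega> \<in> space M. X \<omega> = Y \<omega>}"
      unfolding D_def by auto
    then show ?thesis by (simp only: measure_distr[OF XY D])
  qed
  also have "\<dots> = measure (distr M borel X \<Otimes>\<^sub>M distr M borel Y) D"
    using indep unfolding indep_var_distribution_eq by metis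
  also have "\<dots> = 0"
    \<comment> \<open>Tonelli: each section of the diagonal is a single point, null for the atomless law of \<open>Y\<close>\<close>
  proof -
    have "emeasure (distr M borel X \<Otimes>\<^sub>M distr M borel Y) D
        = (\<integral>\<^sup>+x. emeasure (distr M borel Y) {x} \<partial>distr M borel X)"
      using Y.emeasure_pair_measure_alt[of D "distr M borel X"] D
      by (simp add: D_def vimage_def)
    also have "\<dots> = 0"
      using atomless by (simp add: Y.emeasure_eq_measure)
    finally show ?thesis by (simp add: measure_def)
  qed
  finally show ?thesis .
qed

lemma (in prob_space) AE_inj_on_if_indep_vars_atomless:
  fixes X :: "'i \<Rightarrow> 'a \<Rightarrow> real"
  assumes indep: "indep_vars (\<lambda>_. borel) X I" and "finite I"
    and atomless: "\<And>i s. i \<in> I \<Longrightarrow> measure (distr M borel (X i)) {s} = 0"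
  shows "AE \<omega> in M. inj_on (\<lambda>i. X i \<omega>) I"
proof -
  have "AE \<omega> in M. X i \<omega> \<noteq> X j \<omega>" if ij: "i \<in> I" "j \<in> I" "i \<noteq> j" for i j
  proof -
    have "random_variable borel (X i)" "random_variable borel (X j)"
      using indep ij unfolding indep_vars_def2 by auto
    then have "{\<omega> \<in> space M. X i \<omega> = X j \<omega>} \<in> events"
      by measurable
    moreover have "prob {\<omega> \<in> space M. X i \<omega> = X j \<omega>} = 0"
      using prob_eq_zero_if_indep_var_atomless[OF indep_var_if_indep_vars[OF indep ij]]
        atomless ij(2) by simp
    ultimately show ?thesis by (simp add: prob_Collect_eq_0)
  qed
  then have "AE \<omega> in M. \<forall>i\<in>I. \<forall>j\<in>I. i \<noteq> j \<longrightarrow> X i \<omega> \<noteq> X j \<omega>"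
    using \<open>finite I\<close> by (intro AE_finite_allI) auto
  then show ?thesis
    by eventually_elim (auto simp: inj_on_def)
qed

lemma (in prob_space) prob_strict_max_on_eq:
  fixes X :: "'i \<Rightarrow> 'a \<Rightarrow> real"
  assumes indep: "indep_vars (\<lambda>_. borel) X I" and I: "finite I" "k \<in> I" "n \<in> I"
    and distr: "\<And>i. i \<in> I \<Longrightarrow> distr M borel (X i) = \<mu>" and Q: "Q \<in> sets borel"
  shows "prob {\<omega> \<in> space M. X k \<omega> \<in> Q \<and> strict_max_on I k (\<lambda>i. X i \<omega>)}
       = prob {\<omega> \<in> space M. X n \<omega> \<in> Q \<and> strict_max_on I n (\<lambda>i. X i \<omega>)}"
proof -
  let ?N = "PiM I (\<lambda>_. borel :: real measure)" and ?P = "PiM I (\<lambda>_. \<mu>)"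
  define Y where "Y \<omega> = (\<lambda>i\<in>I. X i \<omega>)" for \<omega>
  define S where "S j = {y \<in> space ?N. y j \<in> Q \<and> strict_max_on I j y}" for j
  have rv: "random_variable borel (X i)" if "i \<in> I" for i
    using indep that unfolding indep_vars_def2 by auto
  have \<mu>: "prob_space \<mu>" "sets \<mu> = sets borel"
    using distr[OF I(2)] prob_space_distr[OF rv[OF I(2)]] by auto
  have Y: "Y \<in> measurable M ?N"
    unfolding Y_def by (rule measurable_restrict) (rule rv)
  have "distr M ?N Y = PiM I (\<lambda>i. distr M borel (X i))"
    using indep indep_vars_iff_distr_eq_PiM'[where I=I and M'="\<lambda>_. borel" and X=X] rv I(2)
    unfolding Y_def by auto
  also have "\<dots> = ?P"
    by (rule PiM_cong) (simp_all add: distr)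
  finally have distr_Y: "distr M ?N Y = ?P" .
  have sets_P: "sets ?P = sets ?N"
    by (rule sets_PiM_cong) (simp_all add: \<mu>(2))
  have space_P: "space ?P = space ?N"
    using sets_P by (rule sets_eq_imp_space_eq)
  have "prob {\<omega> \<in> space M. X j \<omega> \<in> Q \<and> strict_max_on I j (\<lambda>i. X i \<omega>)} = measure ?P (S j)"
    if j: "j \<in> I" for j
  proof -
    have "Y -` S j \<inter> space M = {\<omega> \<in> space M. X j \<omega> \<in> Q \<and> strict_max_on I j (\<lambda>i. X i \<omega>)}"
      using measurable_space[OF Y] j unfolding S_def Y_def by auto
    then show ?thesis
      using measure_distr[OF Y sets_PiM_strict_max_on[OF I(1) j Q]] distr_Y
      unfolding S_def by simp
  qed
  then show ?thesis
    using measure_PiM_strict_max_on_eq[OF \<mu> I Q] I unfolding S_def space_P by simp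
qed

lemma (in prob_space) prob_INT_vimage_iid:
  fixes X :: "'i \<Rightarrow> 'a \<Rightarrow> real"
  assumes indep: "indep_vars (\<lambda>_. borel) X I" and "finite I" "I \<noteq> {}"
    and distr: "\<And>i. i \<in> I \<Longrightarrow> distr M borel (X i) = \<mu>" and Q: "Q \<in> sets borel"
  shows "prob (\<Inter>i\<in>I. X i -` Q \<inter> space M) = measure \<mu> Q ^ card I"
proof -
  have "prob (X i -` Q \<inter> space M) = measure \<mu> Q" if "i \<in> I" for i
    using indep that measure_distr[OF _ Q, of "X i" M] distr[OF that]
    unfolding indep_vars_def2 by auto
  then show ?thesis
    using indep_varsD[OF indep \<open>I \<noteq> {}\<close> \<open>finite I\<close> subset_refl, of "\<lambda>_. Q"] Q by simp
qed

lemma (in prob_space) prob_strict_max_on_iid: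
  fixes X :: "'i \<Rightarrow> 'a \<Rightarrow> real"
  assumes indep: "indep_vars (\<lambda>_. borel) X I" and I: "finite I" "n \<in> I"
    and distr: "\<And>i. i \<in> I \<Longrightarrow> distr M borel (X i) = \<mu>"
    and atomless: "\<And>s. measure \<mu> {s} = 0"
    and Q: "Q \<in> sets borel" "\<And>s s'. s \<in> Q \<Longrightarrow> s' \<le> s \<Longrightarrow> s' \<in> Q"
  shows "prob {\<omega> \<in> space M. X n \<omega> \<in> Q \<and> strict_max_on I n (\<lambda>i. X i \<omega>)}
       = measure \<mu> Q ^ card I / card I"
proof -
  define A where "A k = {\<omega> \<in> space M. X k \<omega> \<in> Q \<and> strict_max_on I k (\<lambda>i. X i \<omega>)}" for k
  define B where "B = (\<Inter>i\<in>I. X i -` Q \<inter> space M)"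
  have I_ne: "I \<noteq> {}" using I(2) by auto
  have rv: "random_variable borel (X i)" if "i \<in> I" for i
    using indep that unfolding indep_vars_def2 by auto
  have A_events: "A k \<in> events" if "k \<in> I" for k
    unfolding A_def strict_max_on_def using rv I(1) that Q(1) by measurable
  have B_events: "B \<in> events"
    unfolding B_def using I(1) I_ne by (intro sets.finite_INT measurable_sets[OF rv Q(1)])
  have "disjoint_family_on A I"
    unfolding disjoint_family_on_def A_def by (auto dest: strict_max_on_unique)
  then have "prob (\<Union>k\<in>I. A k) = (\<Sum>k\<in>I. prob (A k))"
    using A_events I(1) by (intro finite_measure_finite_Union) auto
  also have "\<dots> = card I * prob (A n)"
    using prob_strict_max_on_eq[OF indep I(1) _ I(2) distr Q(1)] unfolding A_def by simp
  finally have prob_A: "prob (\<Union>k\<in>I. A k) = card I * prob (A n)" .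
  have prob_B: "prob B = measure \<mu> Q ^ card I"
    unfolding B_def using prob_INT_vimage_iid[OF indep I(1) I_ne distr Q(1)] .
  have "AE \<omega> in M. inj_on (\<lambda>i. X i \<omega>) I"
    using AE_inj_on_if_indep_vars_atomless[OF indep I(1)] distr atomless by simp
  then have "AE \<omega> in M. \<omega> \<in> (\<Union>k\<in>I. A k) \<longleftrightarrow> \<omega> \<in> B"
    \<comment> \<open>without ties the maximum is strict, and it lies in the down-set \<open>Q\<close> iff all values do\<close>
  proof eventually_elim
    case (elim \<omega>)
    show ?case
    proof
      assume "\<omega> \<in> B"
      moreover obtain k where "k \<in> I" "strict_max_on I k (\<lambda>i. X i \<omega>)"
        using ex_strict_max_on_if_inj_on[OF I(1) _ elim] I(2) by blast
      ultimately show "\<omega> \<in> (\<Union>k\<in>I. A k)"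
        unfolding A_def B_def using I_ne by auto
    next
      assume "\<omega> \<in> (\<Union>k\<in>I. A k)"
      then obtain k where k: "k \<in> I" "\<omega> \<in> space M" "X k \<omega> \<in> Q" "strict_max_on I k (\<lambda>i. X i \<omega>)"
        unfolding A_def by auto
      then have "X i \<omega> \<in> Q" if "i \<in> I" for i
        using Q(2) that unfolding strict_max_on_def by (cases "i = k") (auto intro: less_imp_le)
      then show "\<omega> \<in> B"
        unfolding B_def using I_ne k(2) by auto
    qed
  qed
  then have "prob (\<Union>k\<in>I. A k) = prob B"
    using sets.finite_UN[OF I(1) A_events] B_events by (intro finite_measure_eq_AE) auto
  moreover have "card I > 0"
    using I by (auto simp: card_gt_0_iff)
  ultimately show ?thesis
    using prob_A prob_B unfolding A_def by (simp add: field_simps)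
qed

lemma is_record_iff_strict_max_on:
  "is_record X n \<omega> \<longleftrightarrow> strict_max_on {1..n} n (\<lambda>i. X i \<omega>)"
  unfolding is_record_def strict_max_on_def by auto

lemma (in prob_space) prob_record_iid:
  assumes indep: "indep_vars (\<lambda>_. borel) X {1..}"
    and distr: "\<And>i. i \<ge> 1 \<Longrightarrow> distr M borel (X i) = \<mu>"
    and atomless: "\<And>s. measure \<mu> {s} = 0"
    and n: "n \<ge> 1"
    and Q: "Q \<in> sets borel" "\<And>s s'. s \<in> Q \<Longrightarrow> s' \<le> s \<Longrightarrow> s' \<in> Q"
  shows "prob {\<omega> \<in> space M. X n \<omega> \<in> Q \<and> is_record X n \<omega>} = measure \<mu> Q ^ n / n"
  using prob_strict_max_on_iid[OF indep_vars_subset[OF indep] _ _ distr atomless Q, of "{1..n}" n] n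
  unfolding is_record_iff_strict_max_on by auto

theorem lemma7:
  fixes M :: "'a measure" and X :: "nat \<Rightarrow> 'a \<Rightarrow> real"
    and F G :: "real \<Rightarrow> real" and a b :: "nat \<Rightarrow> real" and x :: real
  assumes "prob_space M"
    and "\<And>i. i \<ge> 1 \<Longrightarrow> X i \<in> borel_measurable M"
    and "prob_space.indep_vars M (\<lambda>_. borel) X {1..}"
    and "\<And>i t. i \<ge> 1 \<Longrightarrow> F t = measure M {\<omega> \<in> space M. X i \<omega> \<le> t}"
    and "continuous_on UNIV F"
    and "max_domain_attraction F G a b"
    and "isCont G x"
  shows "(\<lambda>n. measure M {\<omega> \<in> space M. (X n \<omega> - b n) / a n \<le> x \<and> is_record X n \<omega>}
              / measure M {\<omega> \<in> space M. is_record X n \<omega>}) \<longlonglongrightarrow> G x"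
proof -
  interpret prob_space M by fact
  define \<mu> where "\<mu> = distr M borel (X 1)"
  interpret \<mu>: real_distribution \<mu>
    unfolding \<mu>_def using assms(2) by simp
  have distr: "distr M borel (X i) = \<mu>" if "i \<ge> 1" for i
    unfolding \<mu>_def using assms(2) that assms(4)[OF that] assms(4)[of 1]
    by (intro distr_eq_if_cdf_eq) auto
  have cdf: "cdf \<mu> = F"
    unfolding \<mu>_def using assms(4)[of 1] by (simp add: fun_eq_iff cdf_distr assms(2))
  have atomless: "measure \<mu> {s} = 0" for s
    using \<mu>.isCont_cdf[of s] assms(5) by (simp add: cdf continuous_on_eq_continuous_at)
  have "F (a n * x + b n) ^ n =
      measure M {\<omega> \<in> space M. (X n \<omega> - b n) / a n \<le> x \<and> is_record X n \<omega>}
      / measure M {\<omega> \<in> space M. is_record X n \<omega>}" if n: "n \<ge> 1" for n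
  proof -
    have "(X n \<omega> - b n) / a n \<le> x \<longleftrightarrow> X n \<omega> \<in> {..a n * x + b n}" for \<omega>
      using assms(6) unfolding max_domain_attraction_def by (auto simp: pos_divide_le_eq algebra_simps)
    then show ?thesis
      using prob_record_iid[OF assms(3) distr atomless n, of "{..a n * x + b n}"]
        prob_record_iid[OF assms(3) distr atomless n, of UNIV] n cdf_def2[of \<mu>] \<mu>.prob_space
      by (simp add: cdf)
  qed
  then have "eventually (\<lambda>n. F (a n * x + b n) ^ n =
      measure M {\<omega> \<in> space M. (X n \<omega> - b n) / a n \<le> x \<and> is_record X n \<omega>}
      / measure M {\<omega> \<in> space M. is_record X n \<omega>}) sequentially"
    using eventually_sequentially by blast
  moreover have "(\<lambda>n. F (a n * x + b n) ^ n) \<longlonglongrightarrow> G x"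
    using assms(6,7) unfolding max_domain_attraction_def by simp
  ultimately show ?thesis
    by (rule Lim_transform_eventually[rotated])
qed

end
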